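(* Let $G=(V,E)$ be a graph, $v,u$ two non-adjacent vertices of $G$, and $k$ an integer. For any $c,q\in[k]$ with $c\ne q$, the sets $S(c,c)$ and $S(q,c)$ (defined in the context) are isomorphic, and the map $H(\cdot,q):S(c,c)\to S(q,c)$ is a bijection.
   Context: $[k]=\{1,\dots,k\}$; $\Omega$ is the set of proper $k$-colourings of $G$, $\sigma_w$ the colour of $w$ under $\sigma$, and $\Omega(c,q)\subseteq\Omega$ the colourings with $\sigma_v=c$ and $\sigma_u=q$. For $\sigma\in\Omega$ and $q\in[k]\setminus\{\sigma_v\}$, the disagreement graph $Q_{\sigma_v,q}$ is the subgraph of $G$ induced by all vertices $x$ such that there is a path $v=w_0,\dots,w_t=x$ in $G$ with $\sigma_{w_j}\in\{\sigma_v,q\}$ for all $j$. The $q$-switching $H(\sigma,q)$ is obtained from $\sigma$ by recolouring with $q$ every vertex of $Q_{\sigma_v,q}$ coloured $\sigma_v$ and recolouring with $\sigma_v$ every vertex of $Q_{\sigma_v,q}$ coloured $q$, all other vertices keeping their colour. $S(c,c)$ is the set of $\sigma\in\Omega(c,c)$ such that $u\notin Q_{\sigma_v,q}$; $S(q,c)$ is the set of $\sigma\in\Omega(q,c)$ such that $u\notin Q_{\sigma_v,c}$. Two sets are isomorphic if there is a bijection between them. *)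

theory Defs
  imports "HOL-Library.FuncSet"
begin

definition graph :: "'a set \<Rightarrow> ('a \<Rightarrow> 'a \<Rightarrow> bool) \<Rightarrow> bool" where
  "graph V E \<longleftrightarrow> finite V \<and> (\<forall>x y. E x y \<longrightarrow> x \<in> V \<and> y \<in> V)
     \<and> (\<forall>x y. E x y \<longrightarrow> E y x) \<and> (\<forall>x. \<not> E x x)"

definition colourings :: "'a set \<Rightarrow> ('a \<Rightarrow> 'a \<Rightarrow> bool) \<Rightarrow> nat \<Rightarrow> ('a \<Rightarrow> nat) set" where
  "colourings V E k = {\<sigma> \<in> V \<rightarrow>\<^sub>E {1..k}. \<forall>x y. E x y \<longrightarrow> \<sigma> x \<noteq> \<sigma> y}"

definition colourings_vu ::
  "'a set \<Rightarrow> ('a \<Rightarrow> 'a \<Rightarrow> bool) \<Rightarrow> nat \<Rightarrow> 'a \<Rightarrow> 'a \<Rightarrow> nat \<Rightarrow> nat \<Rightarrow> ('a \<Rightarrow> nat) set" where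
  "colourings_vu V E k v u c q = {\<sigma> \<in> colourings V E k. \<sigma> v = c \<and> \<sigma> u = q}"

definition is_path :: "'a set \<Rightarrow> ('a \<Rightarrow> 'a \<Rightarrow> bool) \<Rightarrow> 'a list \<Rightarrow> bool" where
  "is_path V E ws \<longleftrightarrow> ws \<noteq> [] \<and> set ws \<subseteq> V \<and>
     (\<forall>i. Suc i < length ws \<longrightarrow> E (ws ! i) (ws ! Suc i))"

text \<open>Vertex set of the disagreement graph Q_{sigma_v,q}.\<close>
definition disagreement :: "'a set \<Rightarrow> ('a \<Rightarrow> 'a \<Rightarrow> bool) \<Rightarrow> 'a \<Rightarrow> ('a \<Rightarrow> nat) \<Rightarrow> nat \<Rightarrow> 'a set" where
  "disagreement V E v \<sigma> q = {x. \<exists>ws. is_path V E ws \<and> hd ws = v \<and> last ws = x \<and>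
       (\<forall>w \<in> set ws. \<sigma> w \<in> {\<sigma> v, q})}"

definition switching :: "'a set \<Rightarrow> ('a \<Rightarrow> 'a \<Rightarrow> bool) \<Rightarrow> 'a \<Rightarrow> ('a \<Rightarrow> nat) \<Rightarrow> nat \<Rightarrow> ('a \<Rightarrow> nat)" where
  "switching V E v \<sigma> q = (\<lambda>w. if w \<in> disagreement V E v \<sigma> q then
       (if \<sigma> w = \<sigma> v then q else if \<sigma> w = q then \<sigma> v else \<sigma> w) else \<sigma> w)"

definition S_cc :: "'a set \<Rightarrow> ('a \<Rightarrow> 'a \<Rightarrow> bool) \<Rightarrow> nat \<Rightarrow> 'a \<Rightarrow> 'a \<Rightarrow> nat \<Rightarrow> nat \<Rightarrow> ('a \<Rightarrow> nat) set" where
  "S_cc V E k v u c q = {\<sigma> \<in> colourings_vu V E k v u c c. u \<notin> disagreement V E v \<sigma> q}"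

definition S_qc :: "'a set \<Rightarrow> ('a \<Rightarrow> 'a \<Rightarrow> bool) \<Rightarrow> nat \<Rightarrow> 'a \<Rightarrow> 'a \<Rightarrow> nat \<Rightarrow> nat \<Rightarrow> ('a \<Rightarrow> nat) set" where
  "S_qc V E k v u q c = {\<sigma> \<in> colourings_vu V E k v u q c. u \<notin> disagreement V E v \<sigma> c}"

end

theory Submission
  imports Defs
begin

text \<open>Kempe-chain argument. Switching the two colours \<open>\<sigma> v\<close> and \<open>q\<close> on the component \<open>Q\<close>
  of \<open>v\<close> keeps the colouring proper, since every neighbour of \<open>Q\<close> outside \<open>Q\<close> avoids both
  colours. The vertex set of \<open>Q\<close> only depends on which vertices carry one of the two colours,
  so after the switch the component of \<open>v\<close> for the colour pair \<open>q, \<sigma> v\<close> is again \<open>Q\<close>.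
  Hence switching back with the old colour of \<open>v\<close> undoes the switch, and a vertex \<open>u\<close>
  outside \<open>Q\<close> keeps both its colour and its position outside the component.\<close>

lemma is_path_snoc:
  assumes "is_path V E ws" "E (last ws) y" "y \<in> V"
  shows "is_path V E (ws @ [y])"
proof -
  have "E (ws ! i) y" if "Suc i = length ws" for i
    using assms(1,2) that by (metis is_path_def last_conv_nth diff_Suc_1)
  with assms show ?thesis
    by (auto simp: is_path_def nth_append less_Suc_eq)
qed

lemma root_in_disagreement: "v \<in> V \<Longrightarrow> v \<in> disagreement V E v \<sigma> q"
  unfolding disagreement_def by (intro CollectI exI[of _ "[v]"]) (auto simp: is_path_def)

lemma disagreementD:
  "x \<in> disagreement V E v \<sigma> q \<Longrightarrow> x \<in> V \<and> \<sigma> x \<in> {\<sigma> v, q}"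
  unfolding disagreement_def is_path_def by auto

lemma disagreement_edge_closed:
  assumes "x \<in> disagreement V E v \<sigma> q" "E x y" "y \<in> V" "\<sigma> y \<in> {\<sigma> v, q}"
  shows "y \<in> disagreement V E v \<sigma> q"
proof -
  obtain ws where ws: "is_path V E ws" "hd ws = v" "last ws = x" "\<forall>w\<in>set ws. \<sigma> w \<in> {\<sigma> v, q}"
    using assms(1) unfolding disagreement_def by auto
  have "is_path V E (ws @ [y])"
    using is_path_snoc[OF ws(1)] ws(3) assms(2,3) by simp
  moreover have "hd (ws @ [y]) = v"
    using ws(1,2) by (simp add: is_path_def)
  moreover have "\<forall>w\<in>set (ws @ [y]). \<sigma> w \<in> {\<sigma> v, q}"
    using ws(4) assms(4) by simp
  ultimately show ?thesis
    unfolding disagreement_def by (intro CollectI exI[of _ "ws @ [y]"]) simp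
qed

lemma switching_root: "v \<in> V \<Longrightarrow> switching V E v \<sigma> q v = q"
  using root_in_disagreement[of v V E \<sigma> q] by (simp add: switching_def)

lemma disagreement_switching:
  assumes "v \<in> V" "\<sigma> v \<noteq> q"
  shows "disagreement V E v (switching V E v \<sigma> q) (\<sigma> v) = disagreement V E v \<sigma> q"
proof -
  have "switching V E v \<sigma> q w \<in> {switching V E v \<sigma> q v, \<sigma> v} \<longleftrightarrow> \<sigma> w \<in> {\<sigma> v, q}" for w
    using assms switching_root[OF assms(1)] by (auto simp: switching_def)
  then show ?thesis
    unfolding disagreement_def by simp
qed

lemma switching_switching:
  assumes "v \<in> V" "\<sigma> v \<noteq> q"
  shows "switching V E v (switching V E v \<sigma> q) (\<sigma> v) = \<sigma>"
proof
  fix w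
  let ?\<tau> = "switching V E v \<sigma> q"
  have "switching V E v ?\<tau> (\<sigma> v) w =
      (if w \<in> disagreement V E v \<sigma> q then
        (if ?\<tau> w = q then \<sigma> v else if ?\<tau> w = \<sigma> v then q else ?\<tau> w) else ?\<tau> w)"
    unfolding switching_def[of V E v ?\<tau>] disagreement_switching[where E = E and \<sigma> = \<sigma>, OF assms]
      switching_root[OF assms(1)] ..
  then show "switching V E v ?\<tau> (\<sigma> v) w = \<sigma> w"
    using assms(2) disagreementD[of w V E v \<sigma> q] by (auto simp: switching_def)
qed

lemma switching_in_colourings:
  assumes G: "graph V E" and "v \<in> V" and \<sigma>: "\<sigma> \<in> colourings V E k"
    and "q \<in> {1..k}" and "\<sigma> v \<noteq> q"
  shows "switching V E v \<sigma> q \<in> colourings V E k"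
proof -
  let ?Q = "disagreement V E v \<sigma> q"
  let ?\<tau> = "switching V E v \<sigma> q"
  have "\<sigma> \<in> V \<rightarrow>\<^sub>E {1..k}" and proper: "\<And>x y. E x y \<Longrightarrow> \<sigma> x \<noteq> \<sigma> y"
    using \<sigma> unfolding colourings_def by auto
  have "\<sigma> v \<in> {1..k}"
    using \<open>\<sigma> \<in> V \<rightarrow>\<^sub>E {1..k}\<close> \<open>v \<in> V\<close> by auto
  have "?\<tau> \<in> V \<rightarrow>\<^sub>E {1..k}"
  proof
    show "?\<tau> x \<in> {1..k}" if "x \<in> V" for x
      using that \<open>\<sigma> \<in> V \<rightarrow>\<^sub>E {1..k}\<close> \<open>\<sigma> v \<in> {1..k}\<close> \<open>q \<in> {1..k}\<close>
      by (auto simp: switching_def)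
    show "?\<tau> x = undefined" if "x \<notin> V" for x
      using that \<open>\<sigma> \<in> V \<rightarrow>\<^sub>E {1..k}\<close> disagreementD[of x V E v \<sigma> q]
      by (auto simp: switching_def)
  qed
  moreover have "?\<tau> x \<noteq> ?\<tau> y" if "E x y" for x y
  proof -
    have "x \<in> V" "y \<in> V" "E y x"
      using G \<open>E x y\<close> unfolding graph_def by blast+
    have leave: "\<sigma> b \<notin> {\<sigma> v, q}" if "a \<in> ?Q" "b \<notin> ?Q" "E a b" "b \<in> V" for a b
      using disagreement_edge_closed[OF that(1,3,4)] that(2) by blast
    consider "x \<in> ?Q" "y \<in> ?Q" | "x \<in> ?Q" "y \<notin> ?Q" | "x \<notin> ?Q" "y \<in> ?Q" | "x \<notin> ?Q" "y \<notin> ?Q"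
      by blast
    then show ?thesis
    proof cases
      case 1
      then show ?thesis
        using proper[OF \<open>E x y\<close>] \<open>\<sigma> v \<noteq> q\<close> by (auto simp: switching_def)
    next
      case 2
      then show ?thesis
        using leave[OF _ _ \<open>E x y\<close> \<open>y \<in> V\<close>] disagreementD[of x V E v \<sigma> q]
        by (auto simp: switching_def)
    next
      case 3
      then show ?thesis
        using leave[OF _ _ \<open>E y x\<close> \<open>x \<in> V\<close>] disagreementD[of y V E v \<sigma> q]
        by (auto simp: switching_def)
    next
      case 4
      then show ?thesis
        using proper[OF \<open>E x y\<close>] by (simp add: switching_def)
    qed
  qed
  ultimately show ?thesis
    unfolding colourings_def by auto
qed

lemma switching_outside_disagreement:
  assumes "v \<in> V" "\<sigma> v \<noteq> q" "u \<notin> disagreement V E v \<sigma> q"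
  shows "switching V E v \<sigma> q u = \<sigma> u"
    and "u \<notin> disagreement V E v (switching V E v \<sigma> q) (\<sigma> v)"
  using assms disagreement_switching[where E = E and \<sigma> = \<sigma>, OF assms(1,2)] by (simp_all add: switching_def)

lemma switching_mem_colourings_vu:
  assumes "graph V E" "v \<in> V" "\<sigma> \<in> colourings_vu V E k v u a b" "q \<in> {1..k}" "a \<noteq> q"
    "u \<notin> disagreement V E v \<sigma> q"
  shows "switching V E v \<sigma> q \<in> colourings_vu V E k v u q b"
    and "u \<notin> disagreement V E v (switching V E v \<sigma> q) a"
  using assms switching_in_colourings[OF assms(1,2) _ assms(4)] switching_root[OF assms(2)]
    switching_outside_disagreement[OF assms(2) _ assms(6)]
  by (auto simp: colourings_vu_def)

theorem lemma2:
  fixes V :: "'a set" and E :: "'a \<Rightarrow> 'a \<Rightarrow> bool" and v u :: 'a and k c q :: nat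
  assumes "graph V E"
    and "v \<in> V" and "u \<in> V" and "v \<noteq> u" and "\<not> E v u"
    and "c \<in> {1..k}" and "q \<in> {1..k}" and "c \<noteq> q"
  shows "(\<exists>f. bij_betw f (S_cc V E k v u c q) (S_qc V E k v u q c))
    \<and> bij_betw (\<lambda>\<sigma>. switching V E v \<sigma> q) (S_cc V E k v u c q) (S_qc V E k v u q c)"
proof -
  have "bij_betw (\<lambda>\<sigma>. switching V E v \<sigma> q) (S_cc V E k v u c q) (S_qc V E k v u q c)"
  proof (rule bij_betw_byWitness[where f' = "\<lambda>\<tau>. switching V E v \<tau> c"])
    show "\<forall>\<sigma>\<in>S_cc V E k v u c q. switching V E v (switching V E v \<sigma> q) c = \<sigma>"
      using switching_switching[OF \<open>v \<in> V\<close>] \<open>c \<noteq> q\<close> by (auto simp: S_cc_def colourings_vu_def)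
    show "\<forall>\<tau>\<in>S_qc V E k v u q c. switching V E v (switching V E v \<tau> c) q = \<tau>"
      using switching_switching[OF \<open>v \<in> V\<close>] \<open>c \<noteq> q\<close> by (auto simp: S_qc_def colourings_vu_def)
    show "(\<lambda>\<sigma>. switching V E v \<sigma> q) ` S_cc V E k v u c q \<subseteq> S_qc V E k v u q c"
      using switching_mem_colourings_vu[OF assms(1,2) _ \<open>q \<in> {1..k}\<close> \<open>c \<noteq> q\<close>] by (auto simp: S_cc_def S_qc_def)
    show "(\<lambda>\<tau>. switching V E v \<tau> c) ` S_qc V E k v u q c \<subseteq> S_cc V E k v u c q"
      using switching_mem_colourings_vu[OF assms(1,2) _ \<open>c \<in> {1..k}\<close>] \<open>c \<noteq> q\<close> by (auto simp: S_cc_def S_qc_def)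
  qed
  then show ?thesis
    by blast
qed

end
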